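(* Let $S$ be an $E$-unitary inverse semigroup, $\theta=(\{X_s\}_{s\in S},\{\theta_s\}_{s\in S})$ a topological partial action of $S$ on a topological space $X$, and $\widetilde\theta=(\{X_\gamma\}_{\gamma\in\mathbf{G}(S)},\{\widetilde\theta_\gamma\}_{\gamma\in\mathbf{G}(S)})$ the unique partial action of $\mathbf{G}(S)$ on $X$ with $X_\gamma=\bigcup_{[s]=\gamma}X_s$ and $\widetilde\theta_{[s]}(x)=\theta_s(x)$ for all $s\in S$, $x\in X_{s^*}$. Then $\theta$ is topologically principal if and only if $\widetilde\theta$ is topologically principal.
   Context: Inverse semigroups: $E(S)$ idempotents, $s\le t$ iff $s=ts^*s$; $S$ is $E$-unitary if $e\le s$ with $e\in E(S)$ implies $s\in E(S)$. $\mathbf{G}(S)=S/\!\sim$, $s\sim t$ iff some $u$ has $u\le s,t$; $[s]$ the class of $s$. A topological partial action of an inverse semigroup (in particular of a group) on $X$: open $X_s$, homeomorphisms $\theta_s:X_{s^*}\to X_s$ with $s\mapsto\theta_s$ a partial homomorphism into the inverse semigroup of partial bijections of $X$, and $X=\bigcup_{e\in E(S)}X_e$. With $S_x=\{s:x\in X_{s^*}\}$, $\Lambda(\theta)$ is the set of $x$ such that every $s\in S_x$ with $\theta_s(x)=x$ admits $e\in E(S)\cap S_x$, $e\le s$; topologically principal means $\Lambda(\theta)$ dense in $X$. For a group the only idempotent is the identity, so this says $\theta_g(x)=x$ forces $g=1$. *)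

theory Defs
  imports "HOL-Analysis.Analysis"
begin

definition inverse_semigroup :: "('s::semigroup_mult \<Rightarrow> 's) \<Rightarrow> bool" where
  "inverse_semigroup star \<longleftrightarrow>
     (\<forall>s. s * star s * s = s \<and> star s * s * star s = star s) \<and>
     (\<forall>s t. s * t * s = s \<and> t * s * t = t \<longrightarrow> t = star s)"

definition idempotents :: "'s::semigroup_mult set" where
  "idempotents = {e. e * e = e}"

definition nat_le :: "('s::semigroup_mult \<Rightarrow> 's) \<Rightarrow> 's \<Rightarrow> 's \<Rightarrow> bool" where
  "nat_le star s t \<longleftrightarrow> s = t * star s * s"

definition E_unitary :: "('s::semigroup_mult \<Rightarrow> 's) \<Rightarrow> bool" where
  "E_unitary star \<longleftrightarrow>
     (\<forall>e s. e \<in> idempotents \<and> nat_le star e s \<longrightarrow> s \<in> idempotents)"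

definition sim_rel :: "('s::semigroup_mult \<Rightarrow> 's) \<Rightarrow> 's \<Rightarrow> 's \<Rightarrow> bool" where
  "sim_rel star s t \<longleftrightarrow> (\<exists>u. nat_le star u s \<and> nat_le star u t)"

definition G_class :: "('s::semigroup_mult \<Rightarrow> 's) \<Rightarrow> 's \<Rightarrow> 's set" where
  "G_class star s = {t. sim_rel star s t}"

definition G_carrier :: "('s::semigroup_mult \<Rightarrow> 's) \<Rightarrow> 's set set" where
  "G_carrier star = range (G_class star)"

definition G_inv :: "('s::semigroup_mult \<Rightarrow> 's) \<Rightarrow> 's set \<Rightarrow> 's set" where
  "G_inv star \<gamma> = star ` \<gamma>"

definition G_one :: "('s::semigroup_mult \<Rightarrow> 's) \<Rightarrow> 's set" where
  "G_one star = G_class star (SOME e. e \<in> idempotents)"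

text \<open>Partial homomorphism into the inverse semigroup of partial bijections:
\<theta>_{s*} = \<theta>_s^{-1} and \<theta>_s \<theta>_t \<le> \<theta>_{st} (the latter as an extension of partial maps).\<close>

definition top_partial_action ::
  "'x topology \<Rightarrow> ('s::semigroup_mult \<Rightarrow> 's) \<Rightarrow> ('s \<Rightarrow> 'x set) \<Rightarrow> ('s \<Rightarrow> 'x \<Rightarrow> 'x) \<Rightarrow> bool" where
  "top_partial_action T star Xd th \<longleftrightarrow>
     (\<forall>s. openin T (Xd s)) \<and>
     (\<forall>s. homeomorphic_map (subtopology T (Xd (star s))) (subtopology T (Xd s)) (th s)) \<and>
     (\<forall>s x. x \<in> Xd (star s) \<longrightarrow> th (star s) (th s x) = x) \<and>
     (\<forall>s t x. x \<in> Xd (star t) \<and> th t x \<in> Xd (star s) \<longrightarrow>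
         x \<in> Xd (star (s * t)) \<and> th (s * t) x = th s (th t x)) \<and>
     topspace T = (\<Union>e\<in>idempotents. Xd e)"

definition Lambda_set ::
  "'x topology \<Rightarrow> ('s::semigroup_mult \<Rightarrow> 's) \<Rightarrow> ('s \<Rightarrow> 'x set) \<Rightarrow> ('s \<Rightarrow> 'x \<Rightarrow> 'x) \<Rightarrow> 'x set" where
  "Lambda_set T star Xd th =
     {x \<in> topspace T. \<forall>s. x \<in> Xd (star s) \<and> th s x = x \<longrightarrow>
        (\<exists>e. e \<in> idempotents \<and> x \<in> Xd (star e) \<and> nat_le star e s)}"

definition top_principal ::
  "'x topology \<Rightarrow> ('s::semigroup_mult \<Rightarrow> 's) \<Rightarrow> ('s \<Rightarrow> 'x set) \<Rightarrow> ('s \<Rightarrow> 'x \<Rightarrow> 'x) \<Rightarrow> bool" where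
  "top_principal T star Xd th \<longleftrightarrow> T closure_of (Lambda_set T star Xd th) = topspace T"

definition Lambda_grp ::
  "'x topology \<Rightarrow> 'g set \<Rightarrow> 'g \<Rightarrow> ('g \<Rightarrow> 'g) \<Rightarrow> ('g \<Rightarrow> 'x set) \<Rightarrow> ('g \<Rightarrow> 'x \<Rightarrow> 'x) \<Rightarrow> 'x set" where
  "Lambda_grp T G one ginv Xg thg =
     {x \<in> topspace T. \<forall>g\<in>G. x \<in> Xg (ginv g) \<and> thg g x = x \<longrightarrow> g = one}"

definition top_principal_grp ::
  "'x topology \<Rightarrow> 'g set \<Rightarrow> 'g \<Rightarrow> ('g \<Rightarrow> 'g) \<Rightarrow> ('g \<Rightarrow> 'x set) \<Rightarrow> ('g \<Rightarrow> 'x \<Rightarrow> 'x) \<Rightarrow> bool" where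
  "top_principal_grp T G one ginv Xg thg \<longleftrightarrow>
     T closure_of (Lambda_grp T G one ginv Xg thg) = topspace T"

definition tilde_dom :: "('s \<Rightarrow> 'x set) \<Rightarrow> 's set \<Rightarrow> 'x set" where
  "tilde_dom Xd \<gamma> = (\<Union>s\<in>\<gamma>. Xd s)"

definition tilde_act ::
  "('s::semigroup_mult \<Rightarrow> 's) \<Rightarrow> ('s \<Rightarrow> 'x set) \<Rightarrow> ('s \<Rightarrow> 'x \<Rightarrow> 'x) \<Rightarrow> 's set \<Rightarrow> 'x \<Rightarrow> 'x" where
  "tilde_act star Xd th \<gamma> x = th (SOME s. s \<in> \<gamma> \<and> x \<in> Xd (star s)) x"

end

theory Submission
  imports Defs
begin

text \<open>For E-unitary S both \<Lambda>(\<theta>) and \<Lambda>(\<theta>~) coincide with the set of points whose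
stabiliser consists of idempotents only, so the two density conditions are literally the
same. For \<Lambda>(\<theta>) this is E-unitarity (an idempotent below s makes s idempotent). For
\<Lambda>(\<theta>~), \<theta>~_[s] fixes x iff \<theta>_s does, because \<sim>-related elements act alike where both
are defined; and the unit [e] of G(S) is exactly E(S), again by E-unitarity.\<close>

definition idempotent_stabilizer_points ::
  "'x topology \<Rightarrow> ('s::semigroup_mult \<Rightarrow> 's) \<Rightarrow> ('s \<Rightarrow> 'x set) \<Rightarrow> ('s \<Rightarrow> 'x \<Rightarrow> 'x) \<Rightarrow> 'x set" where
  "idempotent_stabilizer_points T star Xd th =
     {x \<in> topspace T. \<forall>s. x \<in> Xd (star s) \<and> th s x = x \<longrightarrow> s \<in> idempotents}"

locale inverse_semigroup_star =
  fixes star :: "'s::semigroup_mult \<Rightarrow> 's"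
  assumes inverse_semigroup: "inverse_semigroup star"
begin

lemma mult_star_mult: "s * star s * s = s"
  and star_mult_star: "star s * s * star s = star s"
  using inverse_semigroup unfolding inverse_semigroup_def by auto

lemma star_unique: "s * t * s = s \<Longrightarrow> t * s * t = t \<Longrightarrow> t = star s"
  using inverse_semigroup unfolding inverse_semigroup_def by auto

lemma mult_star_mult_left: "s * (star s * (s * x)) = s * x"
  using arg_cong[OF mult_star_mult, of "\<lambda>y. y * x"] by (simp add: mult.assoc)

lemma star_mult_star_left: "star s * (s * (star s * x)) = star s * x"
  using arg_cong[OF star_mult_star, of "\<lambda>y. y * x"] by (simp add: mult.assoc)

lemma idempotent_mult_left: "(e::'s::semigroup_mult) \<in> idempotents \<Longrightarrow> e * (e * x) = e * x"
  unfolding idempotents_def by (simp add: mult.assoc[symmetric])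

lemma star_star [simp]: "star (star s) = s"
  using star_unique[of "star s" s] mult_star_mult star_mult_star by simp

lemma star_idempotent: "(e::'s::semigroup_mult) \<in> idempotents \<Longrightarrow> star e = e"
  using star_unique[of e e] unfolding idempotents_def by simp

lemma mult_star_idempotent: "s * star s \<in> idempotents"
  and star_mult_idempotent: "star s * s \<in> idempotents"
  unfolding idempotents_def
  using mult_star_mult_left star_mult_star_left by (simp_all add: mult.assoc)

text \<open>The inverse z of ef satisfies z = f z e, which makes z idempotent; then ef = z* = z.\<close>
lemma idempotents_mult_closed:
  assumes e: "(e::'s::semigroup_mult) \<in> idempotents" and f: "f \<in> idempotents"
  shows "e * f \<in> idempotents"
proof -
  have ee: "e * e = e" and ff: "f * f = f" using e f by (auto simp: idempotents_def)
  define z where "z = star (e * f)"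
  have "(e * f) * (f * z * e) * (e * f) = e * (f * f) * z * (e * e) * f"
    by (simp add: mult.assoc)
  also have "\<dots> = (e * f) * z * (e * f)" using ee ff by (simp add: mult.assoc)
  also have "\<dots> = e * f" unfolding z_def by (rule mult_star_mult)
  finally have 1: "(e * f) * (f * z * e) * (e * f) = e * f" .
  have "(f * z * e) * (e * f) * (f * z * e) = f * (z * (e * e) * (f * f) * z) * e"
    by (simp add: mult.assoc)
  also have "\<dots> = f * (z * (e * f) * z) * e" using ee ff by (simp add: mult.assoc)
  also have "z * (e * f) * z = z" unfolding z_def by (rule star_mult_star)
  finally have 2: "(f * z * e) * (e * f) * (f * z * e) = f * z * e"
    by (simp add: mult.assoc)
  have fze: "f * z * e = z" using star_unique[OF 1 2] unfolding z_def by simp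
  have "z * z = f * (z * (e * f) * z) * e"
    by (subst (1 2) fze[symmetric]) (simp add: mult.assoc)
  also have "\<dots> = z" using fze unfolding z_def by (simp add: star_mult_star)
  finally have z: "z \<in> idempotents" by (simp add: idempotents_def)
  then have "z = e * f" using star_idempotent[OF z] unfolding z_def by (metis star_star)
  then show ?thesis using z by simp
qed

lemma idempotents_commute:
  assumes e: "(e::'s::semigroup_mult) \<in> idempotents" and f: "f \<in> idempotents"
  shows "e * f = f * e"
proof -
  have ee: "e * e = e" and ff: "f * f = f" using e f by (auto simp: idempotents_def)
  have ef: "e * f \<in> idempotents" and fe: "f * e \<in> idempotents"
    using idempotents_mult_closed e f by auto
  have "(e * f) * (f * e) * (e * f) = e * f" "(f * e) * (e * f) * (f * e) = f * e"
    using ef fe ee ff idempotent_mult_left[OF e] idempotent_mult_left[OF f]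
    by (auto simp: idempotents_def mult.assoc)
  then have "f * e = star (e * f)" by (rule star_unique)
  then show ?thesis using star_idempotent[OF ef] by simp
qed

lemma star_mult: "star (s * t) = star t * star s"
proof -
  have c: "(t * star t) * (star s * s) = (star s * s) * (t * star t)"
    by (rule idempotents_commute[OF mult_star_idempotent star_mult_idempotent])
  have "(s * t) * (star t * star s) * (s * t) = s * ((t * star t) * (star s * s)) * t"
    by (simp add: mult.assoc)
  also have "\<dots> = s * t"
    unfolding c by (simp add: mult.assoc mult_star_mult_left mult_star_mult[simplified mult.assoc])
  finally have 1: "(s * t) * (star t * star s) * (s * t) = s * t" .
  have "(star t * star s) * (s * t) * (star t * star s)
      = star t * ((star s * s) * (t * star t)) * star s"
    by (simp add: mult.assoc)
  also have "\<dots> = star t * star s"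
    unfolding c[symmetric]
    by (simp add: mult.assoc star_mult_star_left star_mult_star[simplified mult.assoc])
  finally have 2: "(star t * star s) * (s * t) * (star t * star s) = star t * star s" .
  show ?thesis using star_unique[OF 1 2] by simp
qed

lemma nat_le_refl: "nat_le star s s"
  unfolding nat_le_def by (simp add: mult_star_mult)

lemma nat_le_idempotent:
  assumes "nat_le star u e" "(e::'s::semigroup_mult) \<in> idempotents"
  shows "u \<in> idempotents"
proof -
  have u: "u = e * (star u * u)" using assms(1) unfolding nat_le_def by (simp add: mult.assoc)
  show ?thesis
    by (subst u) (rule idempotents_mult_closed[OF assms(2) star_mult_idempotent])
qed

lemma nat_le_mult_idempotents:
  assumes e: "(e::'s::semigroup_mult) \<in> idempotents" and f: "f \<in> idempotents"
  shows "nat_le star (e * f) e" "nat_le star (e * f) f"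
proof -
  have ef: "e * f * (e * f) = e * f" and st: "star (e * f) = e * f"
    using idempotents_mult_closed[OF e f] star_idempotent by (auto simp: idempotents_def)
  show "nat_le star (e * f) e"
    unfolding nat_le_def st using ef idempotent_mult_left[OF e] by (simp add: mult.assoc)
  have "f * (e * f) = e * f"
    using idempotents_commute[OF e f] idempotent_mult_left[OF f] by simp
  then show "nat_le star (e * f) f"
    unfolding nat_le_def st using ef by (simp add: mult.assoc)
qed

lemma sim_rel_sym: "sim_rel star s t \<Longrightarrow> sim_rel star t s"
  unfolding sim_rel_def by blast

lemma mem_G_class_self: "s \<in> G_class star s"
  unfolding G_class_def sim_rel_def using nat_le_refl by blast

lemma restrictions_eq_if_mult_star_idempotent:
  assumes e: "s * star t \<in> idempotents"
  shows "s * (star t * t) = t * (star s * s)"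
proof -
  have ts: "t * star s = s * star t"
    using star_idempotent[OF e] star_mult[of s "star t"] by simp
  have "s * (star t * t) = s * ((star s * s) * (star t * t))"
    by (simp add: mult.assoc mult_star_mult_left)
  also have "\<dots> = s * ((star t * t) * (star s * s))"
    by (simp add: idempotents_commute[OF star_mult_idempotent star_mult_idempotent])
  also have "\<dots> = (s * star t) * (t * star s) * s" by (simp add: mult.assoc)
  also have "\<dots> = (t * star s) * s" using e ts by (simp add: idempotents_def)
  finally show ?thesis by (simp add: mult.assoc)
qed

end

locale E_unitary_inverse_semigroup = inverse_semigroup_star star
  for star :: "'s::semigroup_mult \<Rightarrow> 's" +
  assumes E_unitary: "E_unitary star"
begin

lemma idempotent_if_nat_le_idempotent:
  "(e::'s::semigroup_mult) \<in> idempotents \<Longrightarrow> nat_le star e s \<Longrightarrow> s \<in> idempotents"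
  using E_unitary unfolding E_unitary_def by blast

lemma sim_rel_idempotent:
  assumes "sim_rel star s t" and "(t::'s::semigroup_mult) \<in> idempotents"
  shows "s \<in> idempotents"
proof -
  obtain u where "nat_le star u s" and "nat_le star u t"
    using assms(1) unfolding sim_rel_def by blast
  then show ?thesis
    using nat_le_idempotent idempotent_if_nat_le_idempotent assms(2) by blast
qed

text \<open>A common lower bound u gives u u* \<le> s t*, and E-unitarity does the rest.\<close>
lemma sim_rel_mult_star_idempotent:
  assumes "sim_rel star s t"
  shows "s * star t \<in> idempotents"
proof -
  obtain u where u1: "u = s * (star u * u)" and u2: "u = t * (star u * u)"
    using assms unfolding sim_rel_def nat_le_def by (auto simp: mult.assoc)
  have uu: "u * star u = t * star u"
    using u2 star_mult_star by (metis mult.assoc)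
  have "u * (star t * t) = t * ((star u * u) * (star t * t))"
    using u2 by (metis mult.assoc)
  also have "\<dots> = t * ((star t * t) * (star u * u))"
    by (simp add: idempotents_commute[OF star_mult_idempotent star_mult_idempotent])
  also have "\<dots> = t * (star u * u)" by (simp add: mult.assoc mult_star_mult_left)
  also have "\<dots> = u" using u2 by simp
  finally have ut: "u * (star t * t) = u" .
  have "s * star t * (u * star u) = s * star t * (t * star u)" by (simp add: uu)
  also have "\<dots> = s * ((star t * t) * (star u * u)) * star u"
    by (simp add: mult.assoc star_mult_star_left star_mult_star[simplified mult.assoc])
  also have "\<dots> = s * ((star u * u) * (star t * t)) * star u"
    by (simp add: idempotents_commute[OF star_mult_idempotent star_mult_idempotent])
  also have "\<dots> = (s * (star u * u)) * (star t * t) * star u" by (simp add: mult.assoc)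
  also have "\<dots> = u * star u" using u1 ut by simp
  finally have "s * star t * (u * star u) = u * star u" .
  then have "nat_le star (u * star u) (s * star t)"
    using mult_star_idempotent[of u]
    unfolding nat_le_def star_idempotent[OF mult_star_idempotent]
    by (simp add: idempotents_def mult.assoc[symmetric])
  then show ?thesis using idempotent_if_nat_le_idempotent mult_star_idempotent by blast
qed

lemma G_class_idempotent:
  assumes e: "(e::'s::semigroup_mult) \<in> idempotents"
  shows "G_class star e = idempotents"
proof
  show "G_class star e \<subseteq> idempotents"
    using sim_rel_idempotent[OF _ e] sim_rel_sym unfolding G_class_def by blast
  show "idempotents \<subseteq> G_class star e"
    using nat_le_mult_idempotents[OF e] unfolding G_class_def sim_rel_def by blast
qed

lemma G_one_eq_idempotents: "G_one star = idempotents"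
proof -
  have "(SOME e. e \<in> (idempotents :: 's set)) \<in> idempotents"
    using mult_star_idempotent by (rule someI)
  then show ?thesis unfolding G_one_def by (rule G_class_idempotent)
qed

end

lemma partial_action_maps_into:
  assumes A: "top_partial_action T star Xd th" and x: "x \<in> Xd (star t)"
  shows "th t x \<in> Xd t"
proof -
  have "homeomorphic_map (subtopology T (Xd (star t))) (subtopology T (Xd t)) (th t)"
    and "openin T (Xd (star t))"
    using A unfolding top_partial_action_def by blast+
  then show ?thesis
    using x homeomorphic_imp_surjective_map openin_subset by fastforce
qed

lemma (in inverse_semigroup_star) partial_action_star_mult_fixes:
  assumes A: "top_partial_action T star Xd th" and x: "x \<in> Xd (star s)"
  shows "x \<in> Xd (star (star s * s)) \<and> th (star s * s) x = x"
proof -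
  have "th s x \<in> Xd (star (star s))"
    using partial_action_maps_into[OF A x] by simp
  with A x show ?thesis unfolding top_partial_action_def by metis
qed

lemma (in inverse_semigroup_star) partial_action_agree:
  assumes A: "top_partial_action T star Xd th" and e: "s * star t \<in> idempotents"
    and xs: "x \<in> Xd (star s)" and xt: "x \<in> Xd (star t)"
  shows "th s x = th t x"
proof -
  have comp: "\<And>a b. x \<in> Xd (star b) \<Longrightarrow> th b x \<in> Xd (star a) \<Longrightarrow> th (a * b) x = th a (th b x)"
    using A unfolding top_partial_action_def by blast
  have "th s x = th (s * (star t * t)) x"
    using comp partial_action_star_mult_fixes[OF A xt] xs by simp
  also have "\<dots> = th (t * (star s * s)) x"
    by (simp add: restrictions_eq_if_mult_star_idempotent[OF e])
  also have "\<dots> = th t x"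
    using comp partial_action_star_mult_fixes[OF A xs] xt by simp
  finally show ?thesis .
qed

lemma tilde_act_someI:
  assumes "x \<in> tilde_dom Xd (G_inv star \<gamma>)"
  obtains t where "t \<in> \<gamma>" "x \<in> Xd (star t)" "tilde_act star Xd th \<gamma> x = th t x"
proof -
  have "\<exists>t. t \<in> \<gamma> \<and> x \<in> Xd (star t)"
    using assms unfolding tilde_dom_def G_inv_def by blast
  from someI_ex[OF this] show ?thesis
    using that unfolding tilde_act_def by blast
qed

context E_unitary_inverse_semigroup
begin

lemma tilde_act_G_class:
  assumes A: "top_partial_action T star Xd th" and x: "x \<in> Xd (star s)"
  shows "tilde_act star Xd th (G_class star s) x = th s x"
proof -
  have "x \<in> tilde_dom Xd (G_inv star (G_class star s))"
    using x mem_G_class_self unfolding tilde_dom_def G_inv_def by blast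
  then obtain t where "t \<in> G_class star s" "x \<in> Xd (star t)"
    and "tilde_act star Xd th (G_class star s) x = th t x"
    by (rule tilde_act_someI)
  then show ?thesis
    using partial_action_agree[OF A sim_rel_mult_star_idempotent x]
    unfolding G_class_def by simp
qed

lemma Lambda_set_eq: "Lambda_set T star Xd th = idempotent_stabilizer_points T star Xd th"
  unfolding Lambda_set_def idempotent_stabilizer_points_def
  using idempotent_if_nat_le_idempotent nat_le_refl by blast

lemma Lambda_grp_eq:
  assumes A: "top_partial_action T star Xd th"
  shows "Lambda_grp T (G_carrier star) (G_one star) (G_inv star) (tilde_dom Xd)
           (tilde_act star Xd th)
         = idempotent_stabilizer_points T star Xd th"
  unfolding Lambda_grp_def idempotent_stabilizer_points_def G_one_eq_idempotents
proof (intro Collect_cong conj_cong refl iffI allI impI ballI)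
  fix x s
  assume "\<forall>\<gamma>\<in>G_carrier star. x \<in> tilde_dom Xd (G_inv star \<gamma>) \<and>
            tilde_act star Xd th \<gamma> x = x \<longrightarrow> \<gamma> = idempotents"
    and fix_s: "x \<in> Xd (star s) \<and> th s x = x"
  moreover have "x \<in> tilde_dom Xd (G_inv star (G_class star s))"
    using fix_s mem_G_class_self unfolding tilde_dom_def G_inv_def by blast
  ultimately have "G_class star s = idempotents"
    using tilde_act_G_class[OF A] unfolding G_carrier_def by simp
  then show "s \<in> idempotents" using mem_G_class_self by blast
next
  fix x \<gamma>
  assume stab: "\<forall>s. x \<in> Xd (star s) \<and> th s x = x \<longrightarrow> s \<in> idempotents"
    and "\<gamma> \<in> G_carrier star"
    and fix_\<gamma>: "x \<in> tilde_dom Xd (G_inv star \<gamma>) \<and> tilde_act star Xd th \<gamma> x = x"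
  then obtain s where \<gamma>: "\<gamma> = G_class star s" unfolding G_carrier_def by blast
  obtain t where "t \<in> \<gamma>" "x \<in> Xd (star t)" "tilde_act star Xd th \<gamma> x = th t x"
    using fix_\<gamma> by (blast elim: tilde_act_someI)
  then have "t \<in> idempotents" "sim_rel star s t"
    using stab fix_\<gamma> \<gamma> unfolding G_class_def by auto
  then show "\<gamma> = idempotents"
    using \<gamma> sim_rel_idempotent G_class_idempotent by blast
qed

end

theorem proposition7p10:
  fixes T :: "'x topology"
    and star :: "'s::semigroup_mult \<Rightarrow> 's"
    and Xd :: "'s \<Rightarrow> 'x set"
    and th :: "'s \<Rightarrow> 'x \<Rightarrow> 'x"
  assumes "inverse_semigroup star"
    and "E_unitary star"
    and "top_partial_action T star Xd th"
  shows "top_principal T star Xd th \<longleftrightarrow>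
         top_principal_grp T (G_carrier star) (G_one star) (G_inv star)
           (tilde_dom Xd) (tilde_act star Xd th)"
proof -
  interpret E_unitary_inverse_semigroup star
    using assms(1,2) by unfold_locales
  show ?thesis
    unfolding top_principal_def top_principal_grp_def Lambda_set_eq Lambda_grp_eq[OF assms(3)] ..
qed

end
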